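(* A convex body $K\subset\mathbb{C}^n$ is symmetric if and only if some translated copy $K'$ of $K$ has the property that for every complex $1$-dimensional linear subspace $L\subset\mathbb{C}^n$, the orthogonal projection of $K'$ onto $L$ is a closed disk in $L$ centered at the origin.
   Context: A convex body is a compact convex subset of $\mathbb{C}^n$ with nonempty interior. $\mathbb{S}^1=\{\xi\in\mathbb{C}:|\xi|=1\}$. A set $A\subset\mathbb{C}^n$ is called symmetric if there is a translated copy $A'=A-x_0$ of $A$ such that $\xi A'=A'$ for every $\xi\in\mathbb{S}^1$; $x_0$ is then called the center of symmetry. Orthogonal projections are with respect to the standard Hermitian inner product on $\mathbb{C}^n$; a disk in a complex line is a closed Euclidean round disk in it. *)

theory Defs
  imports "HOL-Analysis.Analysis"
begin

definition convex_body :: "(complex ^ 'n) set \<Rightarrow> bool" where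
  "convex_body K \<longleftrightarrow> compact K \<and> convex K \<and> interior K \<noteq> {}"

definition hinner :: "complex ^ 'n \<Rightarrow> complex ^ 'n \<Rightarrow> complex" where
  "hinner x y = (\<Sum>i\<in>UNIV. x $ i * cnj (y $ i))"

definition csymmetric :: "(complex ^ 'n) set \<Rightarrow> bool" where
  "csymmetric A \<longleftrightarrow> (\<exists>x0. \<forall>\<xi>::complex. norm \<xi> = 1 \<longrightarrow>
      (\<lambda>x. \<xi> *s x) ` ((\<lambda>x. x - x0) ` A) = (\<lambda>x. x - x0) ` A)"

definition complex_line :: "(complex ^ 'n) set \<Rightarrow> bool" where
  "complex_line L \<longleftrightarrow> (\<exists>v. v \<noteq> 0 \<and> L = {c *s v | c. True})"

definition orth_proj :: "(complex ^ 'n) set \<Rightarrow> complex ^ 'n \<Rightarrow> complex ^ 'n" where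
  "orth_proj L x = (THE p. p \<in> L \<and> (\<forall>w\<in>L. hinner (x - p) w = 0))"

definition origin_disk_in :: "(complex ^ 'n) set \<Rightarrow> (complex ^ 'n) set \<Rightarrow> bool" where
  "origin_disk_in L D \<longleftrightarrow> (\<exists>r>0. D = {w \<in> L. norm w \<le> r})"

end

theory Submission
  imports Defs
begin

text \<open>
  After translating K so that it is circled (invariant under all unit scalars),
  the projection of K to a complex line \<open>\<complex>v\<close> is the image of K under the complex-valued
  real-linear functional \<open>x \<mapsto> \<langle>x,v\<rangle>/\<langle>v,v\<rangle>\<close>: a compact, convex, circled subset of \<open>\<complex>\<close>, not
  reduced to 0 because K has interior, hence a disk about 0.
  Conversely, if all these projections are disks about 0 but \<open>\<xi>y \<notin> K\<close> for some
  \<open>y \<in> K\<close> and \<open>|\<xi>| = 1\<close>, separate \<open>\<xi>y\<close> from K by a real hyperplane with normal u.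
  Since \<open>Re \<langle>x,u\<rangle>\<close> only depends on the projection of x to \<open>\<complex>u\<close>, and the projection of \<open>\<xi>y\<close>
  is \<open>\<xi>\<close> times that of y, hence lies in the disk, the separation is impossible.
\<close>

lemma hinner_add_left: "hinner (x + y) w = hinner x w + hinner y w"
  by (simp add: hinner_def sum.distrib algebra_simps)

lemma hinner_scale_left: "hinner (c *s x) w = c * hinner x w"
  by (simp add: hinner_def sum_distrib_left algebra_simps)

lemma hinner_scale_right: "hinner x (c *s w) = cnj c * hinner x w"
  by (simp add: hinner_def sum_distrib_left algebra_simps)

lemma hinner_scaleR_left: "hinner (r *\<^sub>R x) w = of_real r * hinner x w"
proof -
  have "(r *\<^sub>R x) $ i = of_real r * x $ i" for i
    by (rule trans[OF vector_scaleR_component]) (simp add: scaleR_conv_of_real)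
  then show ?thesis
    by (simp add: hinner_def sum_distrib_left algebra_simps del: vector_scaleR_component)
qed

lemma hinner_diff_left: "hinner (x - y) w = hinner x w - hinner y w"
  by (simp add: hinner_def sum_subtractf algebra_simps)

lemma inner_eq_Re_hinner: "(x :: complex ^ 'n) \<bullet> y = Re (hinner x y)"
  by (simp add: hinner_def inner_vec_def inner_complex_def Re_sum)

lemma hinner_self: "hinner v v = of_real ((norm (v :: complex ^ 'n))\<^sup>2)"
  by (simp add: norm_vec_def L2_set_def sum_nonneg hinner_def of_real_sum
      flip: complex_norm_square)

lemma linear_hinner_left: "linear (\<lambda>x. hinner x v / c)"
proof (rule linearI)
  show "hinner (r *\<^sub>R x) v / c = r *\<^sub>R (hinner x v / c)" for r x
    by (simp only: hinner_scaleR_left) (simp add: scaleR_conv_of_real)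
qed (simp add: hinner_add_left add_divide_distrib)

lemma norm_vector_smult: "norm (c *s (v :: complex ^ 'n)) = cmod c * norm v"
  by (simp add: norm_vec_def norm_mult L2_set_right_distrib)

lemma orth_proj_complex_line:
  assumes "v \<noteq> 0"
  shows "orth_proj {c *s v | c. True} x = (hinner x v / hinner v v) *s v"
  unfolding orth_proj_def
proof (rule the_equality)
  have vv: "hinner v v \<noteq> 0"
    using assms by (simp add: hinner_self)
  then show "(hinner x v / hinner v v) *s v \<in> {c *s v | c. True} \<and>
      (\<forall>w\<in>{c *s v | c. True}. hinner (x - (hinner x v / hinner v v) *s v) w = 0)"
    by (auto simp: hinner_diff_left hinner_scale_left hinner_scale_right)
  fix p
  assume p: "p \<in> {c *s v | c. True} \<and> (\<forall>w\<in>{c *s v | c. True}. hinner (x - p) w = 0)"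
  then obtain c where c: "p = c *s v"
    by blast
  have "hinner (x - p) (1 *s v) = 0"
    using p by blast
  then have "hinner x v = c * hinner v v"
    by (simp add: c hinner_diff_left hinner_scale_left)
  with vv c show "p = (hinner x v / hinner v v) *s v"
    by simp
qed

lemma complex_line_image_cball:
  assumes "v \<noteq> 0"
  shows "(\<lambda>c. c *s v) ` cball 0 \<rho> = {w \<in> {c *s v | c. True}. norm w \<le> \<rho> * norm (v :: complex ^ 'n)}"
  using assms by (auto simp: norm_vector_smult mult_right_mono)

definition circled :: "(complex ^ 'n) set \<Rightarrow> bool" where
  "circled A \<longleftrightarrow> (\<forall>\<xi>. cmod \<xi> = 1 \<longrightarrow> (\<forall>x\<in>A. \<xi> *s x \<in> A))"

lemma circled_image_eq:
  assumes "circled A" "cmod \<xi> = 1"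
  shows "(\<lambda>x. \<xi> *s x) ` A = A"
proof
  show "(\<lambda>x. \<xi> *s x) ` A \<subseteq> A"
    using assms unfolding circled_def by blast
  show "A \<subseteq> (\<lambda>x. \<xi> *s x) ` A"
  proof
    fix x
    assume "x \<in> A"
    then have "cnj \<xi> *s x \<in> A"
      using assms unfolding circled_def by simp
    moreover have "\<xi> * cnj \<xi> = 1"
      using assms(2) by (simp add: complex_mult_cnj cmod_def)
    ultimately show "x \<in> (\<lambda>x. \<xi> *s x) ` A"
      by (metis image_eqI vector_smult_assoc vector_smult_lid)
  qed
qed

lemma csymmetric_iff_circled_translate:
  "csymmetric K \<longleftrightarrow> (\<exists>a. circled ((\<lambda>x. x + a) ` K))"
proof
  assume "csymmetric K"
  then obtain x0 where "\<forall>\<xi>. norm \<xi> = 1 \<longrightarrow>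
      (\<lambda>x. \<xi> *s x) ` ((\<lambda>x. x + - x0) ` K) = (\<lambda>x. x + - x0) ` K"
    unfolding csymmetric_def by auto
  then have "circled ((\<lambda>x. x + - x0) ` K)"
    unfolding circled_def by (metis image_eqI)
  then show "\<exists>a. circled ((\<lambda>x. x + a) ` K)" ..
next
  assume "\<exists>a. circled ((\<lambda>x. x + a) ` K)"
  then obtain a where "circled ((\<lambda>x. x - - a) ` K)"
    by auto
  then show "csymmetric K"
    unfolding csymmetric_def using circled_image_eq by blast
qed

lemma compact_convex_circled_eq_cball:
  fixes S :: "complex set"
  assumes "compact S" "convex S" "z1 \<in> S" "z1 \<noteq> 0"
    and circ: "\<And>\<xi> s. cmod \<xi> = 1 \<Longrightarrow> s \<in> S \<Longrightarrow> \<xi> * s \<in> S"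
  shows "\<exists>\<rho>>0. S = cball 0 \<rho>"
proof -
  obtain z0 where z0: "z0 \<in> S" "\<And>y. y \<in> S \<Longrightarrow> cmod y \<le> cmod z0"
    using continuous_attains_sup[of S cmod] assms(1,3) continuous_on_norm_id by blast
  define \<rho> where "\<rho> = cmod z0"
  have "\<rho> > 0"
    using z0(2)[OF assms(3)] assms(4) unfolding \<rho>_def by auto
  then have "z0 \<noteq> 0"
    unfolding \<rho>_def by auto
  have "cball 0 \<rho> \<subseteq> S"
  proof
    fix z :: complex
    assume "z \<in> cball 0 \<rho>"
    then have "cmod z \<le> \<rho>"
      by simp
    text \<open>z is a convex combination of the antipodal points \<open>\<plusminus>u z0\<close> of S,
      where \<open>u z0\<close> lies on the ray through z.\<close>
    define u where "u = (if z = 0 then 1 else sgn z / sgn z0)"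
    define t where "t = (1 + cmod z / \<rho>) / 2"
    have "cmod u = 1"
      using \<open>z0 \<noteq> 0\<close> by (simp add: u_def norm_divide norm_sgn)
    then have "u * z0 \<in> S" "(- u) * z0 \<in> S"
      using circ[OF _ z0(1)] by (metis norm_minus_cancel)+
    moreover have "0 \<le> t" "t \<le> 1"
      using \<open>cmod z \<le> \<rho>\<close> \<open>\<rho> > 0\<close> by (auto simp: t_def field_simps)
    ultimately have "t *\<^sub>R (u * z0) + (1 - t) *\<^sub>R ((- u) * z0) \<in> S"
      by (intro convexD[OF assms(2)]) simp_all
    moreover have "t *\<^sub>R (u * z0) + (1 - t) *\<^sub>R ((- u) * z0) = of_real (cmod z / \<rho>) * (u * z0)"
      by (simp add: t_def scaleR_conv_of_real algebra_simps add_divide_distrib)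
    moreover have "of_real (cmod z / \<rho>) * (u * z0) = z"
      using \<open>\<rho> > 0\<close> \<open>z0 \<noteq> 0\<close>
      by (simp add: u_def \<rho>_def sgn_div_norm scaleR_conv_of_real field_simps)
    ultimately show "z \<in> S"
      by simp
  qed
  moreover have "S \<subseteq> cball 0 \<rho>"
    using z0(2) \<rho>_def by auto
  ultimately show ?thesis
    using \<open>\<rho> > 0\<close> by blast
qed

lemma linear_image_nonzero_if_interior:
  fixes f :: "'a::real_normed_vector \<Rightarrow> 'b::real_vector"
  assumes "linear f" "f v \<noteq> 0" "interior K \<noteq> {}"
  shows "\<exists>x\<in>K. f x \<noteq> 0"
proof -
  obtain p e where "e > 0" "ball p e \<subseteq> K"
    using assms(3) mem_interior by blast
  have "v \<noteq> 0"
    using assms(1,2) linear_0 by auto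
  define q where "q = p + (e / 2 / norm v) *\<^sub>R v"
  have "f q - f p = (e / 2 / norm v) *\<^sub>R f v"
    by (simp add: q_def linear_add[OF assms(1)] linear_scale[OF assms(1)])
  then have "f q \<noteq> f p"
    using \<open>e > 0\<close> \<open>v \<noteq> 0\<close> assms(2) by auto
  moreover have "p \<in> K" "q \<in> K"
    using \<open>e > 0\<close> \<open>v \<noteq> 0\<close> \<open>ball p e \<subseteq> K\<close> by (auto simp: q_def dist_norm)
  ultimately show ?thesis
    by metis
qed

lemma origin_disk_projection_if_circled:
  assumes "compact K" "convex K" "interior K \<noteq> {}" "circled K" "complex_line L"
  shows "origin_disk_in L (orth_proj L ` K)"
proof -
  obtain v where "v \<noteq> 0" and L: "L = {c *s v | c. True}"
    using assms(5) complex_line_def by blast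
  define \<phi> where "\<phi> x = hinner x v / hinner v v" for x
  have "hinner v v \<noteq> 0"
    using \<open>v \<noteq> 0\<close> by (simp add: hinner_self)
  have "linear \<phi>"
    unfolding \<phi>_def by (rule linear_hinner_left)
  have "\<phi> v \<noteq> 0"
    using \<open>hinner v v \<noteq> 0\<close> by (simp add: \<phi>_def)
  then obtain x where "x \<in> K" "\<phi> x \<noteq> 0"
    using linear_image_nonzero_if_interior[OF \<open>linear \<phi>\<close> _ assms(3)] by blast
  have "compact (\<phi> ` K)" "convex (\<phi> ` K)"
    using assms(1,2) \<open>linear \<phi>\<close> by (auto intro: compact_continuous_image convex_linear_image
        linear_continuous_on simp: linear_conv_bounded_linear)
  have circ: "\<xi> * s \<in> \<phi> ` K" if "cmod \<xi> = 1" "s \<in> \<phi> ` K" for \<xi> s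
  proof -
    obtain x where "x \<in> K" "s = \<phi> x"
      using \<open>s \<in> \<phi> ` K\<close> by blast
    then have "\<xi> *s x \<in> K" "\<phi> (\<xi> *s x) = \<xi> * s"
      using assms(4) \<open>cmod \<xi> = 1\<close> by (auto simp: circled_def \<phi>_def hinner_scale_left)
    then show ?thesis
      by (metis image_eqI)
  qed
  obtain \<rho> where "\<rho> > 0" "\<phi> ` K = cball 0 \<rho>"
    using compact_convex_circled_eq_cball[OF \<open>compact (\<phi> ` K)\<close> \<open>convex (\<phi> ` K)\<close> _
        \<open>\<phi> x \<noteq> 0\<close> circ] \<open>x \<in> K\<close> by blast
  have "orth_proj L = (\<lambda>x. \<phi> x *s v)"
    using orth_proj_complex_line[OF \<open>v \<noteq> 0\<close>] by (auto simp: L \<phi>_def)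
  then have "orth_proj L ` K = (\<lambda>c. c *s v) ` (\<phi> ` K)"
    by (simp add: image_image)
  also have "\<dots> = {w \<in> L. norm w \<le> \<rho> * norm v}"
    by (simp add: \<open>\<phi> ` K = cball 0 \<rho>\<close> complex_line_image_cball[OF \<open>v \<noteq> 0\<close>] L)
  finally show ?thesis
    unfolding origin_disk_in_def using \<open>\<rho> > 0\<close> \<open>v \<noteq> 0\<close>
    by (metis mult_pos_pos zero_less_norm_iff)
qed

lemma circled_if_origin_disk_projections:
  assumes "closed K" "convex K"
    and disk: "\<And>L. complex_line L \<Longrightarrow> origin_disk_in L (orth_proj L ` K)"
  shows "circled K"
  unfolding circled_def
proof (intro allI impI ballI, rule ccontr)
  fix \<xi> y
  assume "cmod \<xi> = 1" "y \<in> K" "\<xi> *s y \<notin> K"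
  then obtain u b where sep: "u \<bullet> (\<xi> *s y) < b" "\<And>x. x \<in> K \<Longrightarrow> b < u \<bullet> x"
    using separating_hyperplane_closed_point[OF assms(2,1)] by blast
  then have "u \<noteq> 0"
    using \<open>y \<in> K\<close> by fastforce
  define L where "L = {c *s u | c. True}"
  have "complex_line L"
    unfolding complex_line_def L_def using \<open>u \<noteq> 0\<close> by blast
  then obtain r where r: "orth_proj L ` K = {w \<in> L. norm w \<le> r}"
    using disk origin_disk_in_def by blast
  have P: "orth_proj L x = (hinner x u / hinner u u) *s u" for x
    using orth_proj_complex_line[OF \<open>u \<noteq> 0\<close>] L_def by simp
  have "orth_proj L (\<xi> *s y) = \<xi> *s orth_proj L y"
    by (simp add: P hinner_scale_left)
  moreover have "orth_proj L y \<in> L" "norm (orth_proj L y) \<le> r"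
    using \<open>y \<in> K\<close> r by auto
  ultimately have "orth_proj L (\<xi> *s y) \<in> orth_proj L ` K"
    using \<open>cmod \<xi> = 1\<close> r by (auto simp: norm_vector_smult L_def)
  then obtain x where "x \<in> K" "orth_proj L x = orth_proj L (\<xi> *s y)"
    by auto
  text \<open>The functional \<open>\<langle>-,u\<rangle>\<close> factors through the projection to \<open>\<complex>u\<close>.\<close>
  then have "hinner x u / hinner u u = hinner (\<xi> *s y) u / hinner u u"
    using \<open>u \<noteq> 0\<close> by (simp add: P)
  then have "hinner x u = hinner (\<xi> *s y) u"
    using \<open>u \<noteq> 0\<close> by (simp add: hinner_self)
  then have "u \<bullet> x = u \<bullet> (\<xi> *s y)"
    by (metis inner_commute inner_eq_Re_hinner)
  with sep \<open>x \<in> K\<close> show False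
    by fastforce
qed

lemma convex_body_translation: "convex_body K \<Longrightarrow> convex_body ((\<lambda>x. x + a) ` K)"
  using compact_translation[of K a] convex_translation[of K a] interior_translation[of a K]
  by (simp add: convex_body_def add.commute)

theorem lemma2p5:
  fixes K :: "(complex ^ 'n) set"
  assumes "convex_body K"
  shows "csymmetric K \<longleftrightarrow>
    (\<exists>a. \<forall>L. complex_line L \<longrightarrow>
        origin_disk_in L (orth_proj L ` ((\<lambda>x. x + a) ` K)))"
proof -
  have "circled ((\<lambda>x. x + a) ` K) \<longleftrightarrow>
      (\<forall>L. complex_line L \<longrightarrow> origin_disk_in L (orth_proj L ` ((\<lambda>x. x + a) ` K)))" for a
    using convex_body_translation[OF assms, of a]
      origin_disk_projection_if_circled circled_if_origin_disk_projections
    unfolding convex_body_def by (meson compact_imp_closed)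
  then show ?thesis
    by (simp add: csymmetric_iff_circled_translate)
qed

end
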